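(* For any $n\ge0$, $$\mathbb E(\widehat p_n)<\widehat P_n\quad\text{and}\quad\mathbb E(p_{n+1})<P_{n+1}.$$
   Context: Model: nonzero reals $A,B,C,D$, $R:=B^2$; $(V_n),(W_n)$ i.i.d. $N(0,1)$, $X_0\sim N(\widehat X_0^-,P_0)$ ($P_0>0$) independent, $X_{n+1}=AX_n+BW_{n+1}$, $Y_n=CX_n+DV_n$. Kalman variances: $G_n:=CP_n/(C^2P_n+D^2)$, $\widehat P_n:=(1-G_nC)P_n$, $P_{n+1}:=A^2\widehat P_n+R$. EnKF with $N+1$ particles ($N\ge1$): $\xi^i_0$ i.i.d. copies of $X_0$; independent i.i.d. $N(0,1)$ families $(V^i_n),(W^i_n)$ independent of the model; $m_n$ sample mean, $p_n:=\frac1N\sum_{i=1}^{N+1}(\xi^i_n-m_n)^2$, $g_n:=Cp_n/(C^2p_n+D^2)$, $\widehat\xi^i_n:=\xi^i_n+g_n(Y_n-C\xi^i_n-DV^i_n)$, with sample mean $\widehat m_n$ and $\widehat p_n:=\frac1N\sum_i(\widehat\xi^i_n-\widehat m_n)^2$, $\xi^i_{n+1}:=A\widehat\xi^i_n+BW^i_{n+1}$. *)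

theory Defs
  imports "HOL-Probability.Probability"
begin

text \<open>Particles are indexed by i in {0..N} (i.e. N+1 particles).\<close>

definition smean :: "nat \<Rightarrow> (nat \<Rightarrow> real) \<Rightarrow> real" where
  "smean N x = (\<Sum>i\<le>N. x i) / real (N + 1)"

definition svar :: "nat \<Rightarrow> (nat \<Rightarrow> real) \<Rightarrow> real" where
  "svar N x = (\<Sum>i\<le>N. (x i - smean N x)^2) / real N"

definition gain :: "real \<Rightarrow> real \<Rightarrow> real \<Rightarrow> real" where
  "gain C D p = C * p / (C^2 * p + D^2)"

primrec kalP :: "real \<Rightarrow> real \<Rightarrow> real \<Rightarrow> real \<Rightarrow> real \<Rightarrow> nat \<Rightarrow> real" where
  "kalP A B C D P0 0 = P0"
| "kalP A B C D P0 (Suc n) =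
     A^2 * ((1 - gain C D (kalP A B C D P0 n) * C) * kalP A B C D P0 n) + B^2"

definition kalPhat :: "real \<Rightarrow> real \<Rightarrow> real \<Rightarrow> real \<Rightarrow> real \<Rightarrow> nat \<Rightarrow> real" where
  "kalPhat A B C D P0 n = (1 - gain C D (kalP A B C D P0 n) * C) * kalP A B C D P0 n"

primrec sigX :: "real \<Rightarrow> real \<Rightarrow> ('a \<Rightarrow> real) \<Rightarrow> (nat \<Rightarrow> 'a \<Rightarrow> real) \<Rightarrow> nat \<Rightarrow> 'a \<Rightarrow> real" where
  "sigX A B X0 W 0 = X0"
| "sigX A B X0 W (Suc n) = (\<lambda>\<omega>. A * sigX A B X0 W n \<omega> + B * W (Suc n) \<omega>)"

definition obsY :: "real \<Rightarrow> real \<Rightarrow> real \<Rightarrow> real \<Rightarrow> ('a \<Rightarrow> real) \<Rightarrow> (nat \<Rightarrow> 'a \<Rightarrow> real)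
    \<Rightarrow> (nat \<Rightarrow> 'a \<Rightarrow> real) \<Rightarrow> nat \<Rightarrow> 'a \<Rightarrow> real" where
  "obsY A B C D X0 W V n \<omega> = C * sigX A B X0 W n \<omega> + D * V n \<omega>"

definition analysis :: "real \<Rightarrow> real \<Rightarrow> nat \<Rightarrow> real \<Rightarrow> (nat \<Rightarrow> real) \<Rightarrow> (nat \<Rightarrow> real) \<Rightarrow> nat \<Rightarrow> real" where
  "analysis C D N y v x = (\<lambda>i. x i + gain C D (svar N x) * (y - C * x i - D * v i))"

text \<open>EnKF forecast particles xi^i_n(omega) = enkf ... n omega i.
  Vp i n = V^i_n, Wp i n = W^i_n, xi0 i = xi^i_0.\<close>
primrec enkf :: "real \<Rightarrow> real \<Rightarrow> real \<Rightarrow> real \<Rightarrow> nat \<Rightarrow> ('a \<Rightarrow> real) \<Rightarrow> (nat \<Rightarrow> 'a \<Rightarrow> real)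
    \<Rightarrow> (nat \<Rightarrow> 'a \<Rightarrow> real) \<Rightarrow> (nat \<Rightarrow> 'a \<Rightarrow> real) \<Rightarrow> (nat \<Rightarrow> nat \<Rightarrow> 'a \<Rightarrow> real)
    \<Rightarrow> (nat \<Rightarrow> nat \<Rightarrow> 'a \<Rightarrow> real) \<Rightarrow> nat \<Rightarrow> 'a \<Rightarrow> nat \<Rightarrow> real" where
  "enkf A B C D N X0 W V xi0 Vp Wp 0 = (\<lambda>\<omega> i. xi0 i \<omega>)"
| "enkf A B C D N X0 W V xi0 Vp Wp (Suc n) = (\<lambda>\<omega> i.
     A * analysis C D N (obsY A B C D X0 W V n \<omega>) (\<lambda>j. Vp j n \<omega>)
           (enkf A B C D N X0 W V xi0 Vp Wp n \<omega>) i
     + B * Wp i (Suc n) \<omega>)"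

definition enkf_p where
  "enkf_p A B C D N X0 W V xi0 Vp Wp n \<omega> = svar N (enkf A B C D N X0 W V xi0 Vp Wp n \<omega>)"

definition enkf_phat where
  "enkf_phat A B C D N X0 W V xi0 Vp Wp n \<omega> =
     svar N (analysis C D N (obsY A B C D X0 W V n \<omega>) (\<lambda>j. Vp j n \<omega>)
               (enkf A B C D N X0 W V xi0 Vp Wp n \<omega>))"

text \<open>Labels of all primitive random variables, for stating joint independence.\<close>
datatype rvlabel = LX0 | LW nat | LV nat | LXi nat | LVp nat nat | LWp nat nat

fun rv_of :: "('a \<Rightarrow> real) \<Rightarrow> (nat \<Rightarrow> 'a \<Rightarrow> real) \<Rightarrow> (nat \<Rightarrow> 'a \<Rightarrow> real) \<Rightarrow> (nat \<Rightarrow> 'a \<Rightarrow> real)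
    \<Rightarrow> (nat \<Rightarrow> nat \<Rightarrow> 'a \<Rightarrow> real) \<Rightarrow> (nat \<Rightarrow> nat \<Rightarrow> 'a \<Rightarrow> real) \<Rightarrow> rvlabel \<Rightarrow> 'a \<Rightarrow> real" where
  "rv_of X0 W V xi0 Vp Wp LX0 = X0"
| "rv_of X0 W V xi0 Vp Wp (LW n) = W n"
| "rv_of X0 W V xi0 Vp Wp (LV n) = V n"
| "rv_of X0 W V xi0 Vp Wp (LXi i) = xi0 i"
| "rv_of X0 W V xi0 Vp Wp (LVp i n) = Vp i n"
| "rv_of X0 W V xi0 Vp Wp (LWp i n) = Wp i n"

definition labels :: "nat \<Rightarrow> rvlabel set" where
  "labels N = {LX0} \<union> range LW \<union> range LV \<union> LXi ` {..N}
     \<union> {LVp i n | i n. i \<le> N} \<union> {LWp i n | i n. i \<le> N}"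

end

theory Submission
  imports Defs
begin

text \<open>
  The analysis particles are an affine combination of the forecast particles, the observation and
  the perturbations V^i_n, which are centred and independent of the forecast ensemble. Hence the
  cross terms in the sample variance of the analysis ensemble vanish in expectation, and
  E(hat p_n) = E(phi(p_n)) with phi(p) = D^2 p / (C^2 p + D^2) the Kalman map P_n to hat P_n;
  in the same way E(p_(n+1)) = A^2 E(hat p_n) + B^2. As phi is increasing and strictly concave,
  comparing phi with its tangent at P_n turns E(p_n) <= P_n into E(phi(p_n)) <= phi(P_n).
  The inequality is strict: for n >= 1 because E(p_n) < P_n by induction, and for n = 0 because
  p_0 <= P_0/2 with positive probability, and there phi stays a fixed distance below the tangent.
\<close>

section \<open>Sample mean and variance\<close>

lemma svar_nonneg: "0 \<le> svar N x"
  by (simp add: svar_def sum_nonneg)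

lemma sum_diff_smean: "(\<Sum>i\<le>N. x i - smean N x) = 0"
  by (simp add: sum_subtractf smean_def)

lemma smean_affine: "smean N (\<lambda>i. a * x i + b * y i + c) = a * smean N x + b * smean N y + c"
  by (simp add: smean_def sum.distrib sum_distrib_left add_divide_distrib)

definition scov :: "nat \<Rightarrow> (nat \<Rightarrow> real) \<Rightarrow> (nat \<Rightarrow> real) \<Rightarrow> real" where
  "scov N x y = (\<Sum>i\<le>N. (x i - smean N x) * (y i - smean N y)) / real N"

lemma scov_eq: "scov N x y = (\<Sum>i\<le>N. (x i - smean N x) * y i) / real N"
proof -
  have "(\<Sum>i\<le>N. (x i - smean N x) * (y i - smean N y))
      = (\<Sum>i\<le>N. (x i - smean N x) * y i - (x i - smean N x) * smean N y)"
    by (simp add: right_diff_distrib)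
  also have "\<dots> = (\<Sum>i\<le>N. (x i - smean N x) * y i) - (\<Sum>i\<le>N. x i - smean N x) * smean N y"
    by (simp only: sum_subtractf sum_distrib_right[symmetric])
  finally show ?thesis
    unfolding scov_def using sum_diff_smean[of x N] by simp
qed

lemma svar_affine:
  "svar N (\<lambda>i. a * x i + b * y i + c) = a^2 * svar N x + b^2 * svar N y + 2 * a * b * scov N x y"
proof -
  have "(a * x i + b * y i + c - smean N (\<lambda>i. a * x i + b * y i + c))^2 =
      a^2 * (x i - smean N x)^2 + b^2 * (y i - smean N y)^2
      + 2 * a * b * ((x i - smean N x) * (y i - smean N y))" for i
    unfolding smean_affine by (simp add: power2_eq_square algebra_simps)
  then show ?thesis
    by (simp add: svar_def scov_def sum.distrib sum_distrib_left add_divide_distrib)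
qed

lemma svar_add_const: "svar N (\<lambda>i. x i + c) = svar N x"
  using svar_affine[of N 1 x 0 x c] by simp

lemma svar_eq_sums: "svar N x = ((\<Sum>i\<le>N. (x i)^2) - (\<Sum>i\<le>N. x i)^2 / real (N + 1)) / real N"
proof -
  have "(\<Sum>i\<le>N. (x i - smean N x)^2)
      = (\<Sum>i\<le>N. (x i)^2) - 2 * smean N x * (\<Sum>i\<le>N. x i) + real (N + 1) * (smean N x)^2"
    by (simp add: power2_diff sum.distrib sum_subtractf sum_distrib_left mult_ac)
  also have "\<dots> = (\<Sum>i\<le>N. (x i)^2) - (\<Sum>i\<le>N. x i)^2 / real (N + 1)"
  proof -
    have "T - 2 * (S / r) * S + r * (S / r)^2 = T - S^2 / r" if "r > 0" for T S r :: real
      using that by (simp add: field_simps power2_eq_square)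
    then show ?thesis
      unfolding smean_def by simp
  qed
  finally show ?thesis
    by (simp add: svar_def)
qed

lemma svar_le_sum_sq_diff: "svar N x \<le> (\<Sum>i\<le>N. (x i - c)^2) / real N"
proof -
  have "svar N x = svar N (\<lambda>i. x i - c)"
    using svar_add_const[of N "\<lambda>i. x i - c" c] by simp
  also have "\<dots> = ((\<Sum>i\<le>N. (x i - c)^2) - (\<Sum>i\<le>N. x i - c)^2 / real (N + 1)) / real N"
    by (rule svar_eq_sums)
  also have "\<dots> \<le> (\<Sum>i\<le>N. (x i - c)^2) / real N"
    by (intro divide_right_mono) auto
  finally show ?thesis .
qed

lemma svar_le_of_abs_diff_le:
  assumes "1 \<le> N" "\<And>i. i \<le> N \<Longrightarrow> \<bar>x i - c\<bar> \<le> \<delta>"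
  shows "svar N x \<le> 2 * \<delta>^2"
proof -
  have "(x i - c)^2 \<le> \<delta>^2" if "i \<le> N" for i
    using power_mono[OF assms(2)[OF that] abs_ge_zero, of 2] by simp
  then have "(\<Sum>i\<le>N. (x i - c)^2) \<le> real (N + 1) * \<delta>^2"
    using sum_bounded_above[of "{..N}" "\<lambda>i. (x i - c)^2" "\<delta>^2"] by simp
  also have "\<dots> \<le> (2 * real N) * \<delta>^2"
    using assms(1) by (intro mult_right_mono) auto
  also have "\<dots> = 2 * \<delta>^2 * real N"
    by simp
  finally have "(\<Sum>i\<le>N. (x i - c)^2) / real N \<le> 2 * \<delta>^2"
    using assms(1) by (simp add: pos_divide_le_eq)
  then show ?thesis
    using svar_le_sum_sq_diff[of N x c] by linarith
qed

section \<open>The Kalman analysis variance map\<close>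

definition analysis_var :: "real \<Rightarrow> real \<Rightarrow> real \<Rightarrow> real" where
  "analysis_var C D p = D^2 * p / (C^2 * p + D^2)"

lemma innovation_var_pos:
  fixes C D p :: real
  assumes "0 \<le> p" "D \<noteq> 0"
  shows "0 < C^2 * p + D^2"
  using assms by (auto intro!: add_nonneg_pos)

lemma one_minus_gain_mult:
  assumes "0 \<le> p" "D \<noteq> 0"
  shows "1 - gain C D p * C = D^2 / (C^2 * p + D^2)"
  using innovation_var_pos[OF assms, of C] by (simp add: gain_def field_simps power2_eq_square)

lemma one_minus_gain_mult_bounds:
  assumes "0 \<le> p" "D \<noteq> 0"
  shows "0 \<le> 1 - gain C D p * C" "1 - gain C D p * C \<le> 1"
  using innovation_var_pos[OF assms, of C] assms by (simp_all add: one_minus_gain_mult)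

lemma abs_gain_le:
  assumes "0 \<le> p" "C \<noteq> 0"
  shows "\<bar>gain C D p\<bar> \<le> 1 / \<bar>C\<bar>"
proof (cases "p = 0")
  case False
  then have "0 < p" "0 < C^2 * p"
    using assms by auto
  then have "\<bar>C\<bar> * p / (C^2 * p + D^2) \<le> \<bar>C\<bar> * p / (C^2 * p)"
    by (intro divide_left_mono) (auto intro!: mult_pos_pos add_pos_nonneg)
  also have "\<dots> = 1 / \<bar>C\<bar>"
    using \<open>0 < p\<close> assms(2) by (simp add: power2_eq_square field_simps abs_mult_self_eq)
  finally show ?thesis
    using \<open>0 < p\<close> by (simp add: gain_def abs_mult abs_divide)
qed (simp add: gain_def)

lemma analysis_var_eq_gain:
  "0 \<le> p \<Longrightarrow> D \<noteq> 0 \<Longrightarrow> (1 - gain C D p * C) * p = analysis_var C D p"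
  by (simp add: one_minus_gain_mult analysis_var_def)

lemma analysis_var_eq_gain_square:
  assumes "0 \<le> p" "D \<noteq> 0"
  shows "(1 - gain C D p * C)^2 * p + D^2 * (gain C D p)^2 = analysis_var C D p"
proof -
  have "0 < C^2 * p + D^2"
    using innovation_var_pos[OF assms] .
  then show ?thesis
    unfolding one_minus_gain_mult[OF assms] gain_def analysis_var_def
    by (simp add: field_simps) algebra
qed

lemma analysis_var_nonneg: "0 \<le> p \<Longrightarrow> D \<noteq> 0 \<Longrightarrow> 0 \<le> analysis_var C D p"
  using innovation_var_pos[of p D C] by (simp add: analysis_var_def)

lemma analysis_var_le: "0 \<le> p \<Longrightarrow> D \<noteq> 0 \<Longrightarrow> analysis_var C D p \<le> p"
  using innovation_var_pos[of p D C]
  by (simp add: analysis_var_def divide_le_eq algebra_simps)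

lemma analysis_var_tangent_gap:
  assumes "0 \<le> p" "0 \<le> q" "D \<noteq> 0"
  shows "analysis_var C D q + (D^2 / (C^2 * q + D^2))^2 * (p - q) - analysis_var C D p
    = C^2 * (D^2)^2 * (p - q)^2 / ((C^2 * q + D^2)^2 * (C^2 * p + D^2))"
proof -
  define X Y where "X = C^2 * p + D^2" and "Y = C^2 * q + D^2"
  have "0 < X" "0 < Y"
    unfolding X_def Y_def using innovation_var_pos assms by auto
  then have "D^2 * q / Y + (D^2 / Y)^2 * (p - q) - D^2 * p / X
      = (D^2 * q * Y * X + (D^2)^2 * (p - q) * X - D^2 * p * Y^2) / (Y^2 * X)"
    by (simp add: field_simps power2_eq_square)
  also have "D^2 * q * Y * X + (D^2)^2 * (p - q) * X - D^2 * p * Y^2 = C^2 * (D^2)^2 * (p - q)^2"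
    unfolding X_def Y_def by algebra
  finally show ?thesis
    unfolding analysis_var_def X_def Y_def .
qed

lemma analysis_var_le_tangent:
  assumes "0 \<le> p" "0 \<le> q" "D \<noteq> 0"
  shows "analysis_var C D p \<le> analysis_var C D q + (D^2 / (C^2 * q + D^2))^2 * (p - q)"
proof -
  have "0 \<le> C^2 * (D^2)^2 * (p - q)^2 / ((C^2 * q + D^2)^2 * (C^2 * p + D^2))"
    using innovation_var_pos[OF assms(1,3), of C] by simp
  then show ?thesis
    using analysis_var_tangent_gap[OF assms, of C] by linarith
qed

lemma analysis_var_tangent_gap_ge:
  assumes "D \<noteq> 0" "0 \<le> p" "p \<le> q / 2"
  shows "C^2 * (D^2)^2 * (q / 2)^2 / (C^2 * q + D^2)^3
    \<le> analysis_var C D q + (D^2 / (C^2 * q + D^2))^2 * (p - q) - analysis_var C D p"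
proof -
  have "0 \<le> q" "q / 2 \<le> q - p"
    using assms(2,3) by auto
  then have "(q / 2)^2 \<le> (p - q)^2"
    using power_mono[of "q / 2" "q - p" 2] by (simp add: power2_commute)
  then have num: "C^2 * (D^2)^2 * (q / 2)^2 \<le> C^2 * (D^2)^2 * (p - q)^2"
    by (intro mult_left_mono) auto
  have "C^2 * p + D^2 \<le> C^2 * q + D^2"
    using assms(2,3) by (intro add_right_mono mult_left_mono) auto
  then have "(C^2 * q + D^2)^2 * (C^2 * p + D^2) \<le> (C^2 * q + D^2)^2 * (C^2 * q + D^2)"
    by (rule mult_left_mono) simp
  also have "\<dots> = (C^2 * q + D^2)^3"
    by (simp add: power3_eq_cube power2_eq_square)
  finally have den: "(C^2 * q + D^2)^2 * (C^2 * p + D^2) \<le> (C^2 * q + D^2)^3" .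
  have "0 < (C^2 * q + D^2)^2 * (C^2 * p + D^2)"
    using innovation_var_pos[OF assms(2,1), of C] innovation_var_pos[OF \<open>0 \<le> q\<close> assms(1), of C]
    by simp
  then have "C^2 * (D^2)^2 * (q / 2)^2 / (C^2 * q + D^2)^3
      \<le> C^2 * (D^2)^2 * (p - q)^2 / ((C^2 * q + D^2)^2 * (C^2 * p + D^2))"
    using num den by (intro frac_le) auto
  then show ?thesis
    using analysis_var_tangent_gap[OF assms(2) \<open>0 \<le> q\<close> assms(1), of C] by linarith
qed

lemma kalP_pos:
  assumes "0 < P0" "B \<noteq> 0" "D \<noteq> 0"
  shows "0 < kalP A B C D P0 n"
proof (induction n)
  case (Suc n)
  then have "0 \<le> A^2 * ((1 - gain C D (kalP A B C D P0 n) * C) * kalP A B C D P0 n)"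
    using one_minus_gain_mult_bounds(1)[OF _ assms(3)] by simp
  then show ?case
    using assms(2) by (simp add: add_nonneg_pos)
qed (simp add: assms(1))

lemma kalP_Suc_kalPhat: "kalP A B C D P0 (Suc n) = A^2 * kalPhat A B C D P0 n + B^2"
  by (simp add: kalPhat_def)

lemma kalPhat_eq_analysis_var:
  "0 < P0 \<Longrightarrow> B \<noteq> 0 \<Longrightarrow> D \<noteq> 0 \<Longrightarrow> kalPhat A B C D P0 n = analysis_var C D (kalP A B C D P0 n)"
  unfolding kalPhat_def by (intro analysis_var_eq_gain less_imp_le[OF kalP_pos])

section \<open>Square-integrable random variables\<close>

definition square_integrable :: "'a measure \<Rightarrow> ('a \<Rightarrow> real) \<Rightarrow> bool" where
  "square_integrable M f \<longleftrightarrow> f \<in> borel_measurable M \<and> integrable M (\<lambda>x. (f x)^2)"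

lemma integrable_square: "square_integrable M f \<Longrightarrow> integrable M (\<lambda>x. (f x)^2)"
  by (simp add: square_integrable_def)

lemma square_integrable_zero: "square_integrable M (\<lambda>_. 0)"
  by (simp add: square_integrable_def)

lemma square_integrable_add:
  assumes "square_integrable M f" "square_integrable M g"
  shows "square_integrable M (\<lambda>x. f x + g x)"
proof -
  have [measurable]: "f \<in> borel_measurable M" "g \<in> borel_measurable M"
    using assms by (auto simp: square_integrable_def)
  have bound: "(f x + g x)^2 \<le> 2 * (f x)^2 + 2 * (g x)^2" for x
    using zero_le_power2[of "f x - g x"] by (simp add: power2_eq_square algebra_simps)
  have "integrable M (\<lambda>x. 2 * (f x)^2 + 2 * (g x)^2)"
    using assms by (simp add: square_integrable_def)
  then have "integrable M (\<lambda>x. (f x + g x)^2)"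
    by (rule Bochner_Integration.integrable_bound) (measurable, use bound in \<open>auto intro!: AE_I2\<close>)
  then show ?thesis
    by (simp add: square_integrable_def)
qed

lemma square_integrable_bounded_mult:
  assumes [measurable]: "h \<in> borel_measurable M"
    and bound: "\<And>x. x \<in> space M \<Longrightarrow> \<bar>h x\<bar> \<le> c" and f: "square_integrable M f"
  shows "square_integrable M (\<lambda>x. h x * f x)"
proof -
  have [measurable]: "f \<in> borel_measurable M"
    using f by (simp add: square_integrable_def)
  have bound2: "(h x * f x)^2 \<le> c^2 * (f x)^2" if "x \<in> space M" for x
  proof -
    have "(h x)^2 \<le> c^2"
      using power_mono[OF bound[OF that] abs_ge_zero, of 2] by simp
    then show ?thesis
      by (simp add: power_mult_distrib mult_right_mono)
  qed
  have "integrable M (\<lambda>x. c^2 * (f x)^2)"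
    using f by (simp add: square_integrable_def)
  then have "integrable M (\<lambda>x. (h x * f x)^2)"
    by (rule Bochner_Integration.integrable_bound) (measurable, use bound2 in \<open>auto intro!: AE_I2\<close>)
  then show ?thesis
    by (simp add: square_integrable_def)
qed

lemma square_integrable_cmult: "square_integrable M f \<Longrightarrow> square_integrable M (\<lambda>x. c * f x)"
  by (rule square_integrable_bounded_mult[of "\<lambda>_. c" _ "\<bar>c\<bar>"]) auto

lemma square_integrable_diff:
  "square_integrable M f \<Longrightarrow> square_integrable M g \<Longrightarrow> square_integrable M (\<lambda>x. f x - g x)"
  using square_integrable_add[of M f "\<lambda>x. (-1) * g x"] square_integrable_cmult[of M g "-1"] by simp

lemma square_integrable_sum:
  "finite I \<Longrightarrow> (\<And>i. i \<in> I \<Longrightarrow> square_integrable M (f i))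
    \<Longrightarrow> square_integrable M (\<lambda>x. \<Sum>i\<in>I. f i x)"
  by (induction I rule: finite_induct) (auto intro: square_integrable_zero square_integrable_add)

lemma integrable_mult_square_integrable:
  assumes "square_integrable M f" "square_integrable M g"
  shows "integrable M (\<lambda>x. f x * g x)"
proof -
  have [measurable]: "f \<in> borel_measurable M" "g \<in> borel_measurable M"
    using assms by (auto simp: square_integrable_def)
  have bound: "\<bar>f x * g x\<bar> \<le> (f x)^2 + (g x)^2" for x
  proof -
    have "2 * \<bar>f x * g x\<bar> \<le> (f x)^2 + (g x)^2"
      using sum_squares_bound[of "\<bar>f x\<bar>" "\<bar>g x\<bar>"] by (simp add: abs_mult)
    then show ?thesis
      by simp
  qed
  have "integrable M (\<lambda>x. (f x)^2 + (g x)^2)"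
    using assms by (simp add: square_integrable_def)
  then show ?thesis
    by (rule Bochner_Integration.integrable_bound) (measurable, use bound in \<open>auto intro!: AE_I2\<close>)
qed

context finite_measure
begin

lemma square_integrable_const: "square_integrable M (\<lambda>_. c)"
  by (simp add: square_integrable_def)

lemma integrable_of_square_integrable: "square_integrable M f \<Longrightarrow> integrable M f"
  by (simp add: square_integrable_def square_integrable_imp_integrable)

end

lemma (in prob_space) square_integrable_normal:
  assumes "0 < \<sigma>" "distributed M lborel X (normal_density \<mu> \<sigma>)"
  shows "square_integrable M X"
proof -
  have "integrable lborel (\<lambda>x. normal_density \<mu> \<sigma> x * (x - \<mu>)^2)"
    using integrable_normal_moment[OF assms(1), of \<mu> 2] by simp
  then have "integrable M (\<lambda>x. (X x - \<mu>)^2)"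
    using distributed_integrable[OF assms(2), of "\<lambda>x. (x - \<mu>)^2"] by simp
  moreover have "X \<in> borel_measurable M"
    using assms(2) by (metis distributed_measurable measurable_lborel1)
  ultimately have "square_integrable M (\<lambda>x. X x - \<mu>)"
    by (simp add: square_integrable_def)
  from square_integrable_add[OF this square_integrable_const[of \<mu>]] show ?thesis
    by simp
qed

lemma (in prob_space) prob_normal_interval_pos:
  assumes "0 < \<sigma>" "distributed M lborel Y (normal_density \<mu> \<sigma>)" "a < b"
  shows "0 < prob (Y -` {a<..<b} \<inter> space M)"
proof -
  let ?S = "{a<..<b}"
  have density_nonzero: "normal_density \<mu> \<sigma> x \<noteq> 0" for x
    using normal_density_pos[OF assms(1), of \<mu> x] by simp
  have "(\<integral>\<^sup>+x. ennreal (normal_density \<mu> \<sigma> x) * indicator ?S x \<partial>lborel) \<noteq> 0"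
  proof
    assume "(\<integral>\<^sup>+x. ennreal (normal_density \<mu> \<sigma> x) * indicator ?S x \<partial>lborel) = 0"
    then have "AE x in lborel. ennreal (normal_density \<mu> \<sigma> x) * indicator ?S x = 0"
      by (subst (asm) nn_integral_0_iff_AE) auto
    then have "AE x in lborel. x \<notin> ?S"
      using density_nonzero by (auto elim!: eventually_mono split: split_indicator)
    then have "emeasure lborel ?S = 0"
      by (subst (asm) AE_iff_measurable[of ?S]) auto
    then show False
      using assms(3) by simp
  qed
  then have "emeasure M (Y -` ?S \<inter> space M) \<noteq> 0"
    using distributed_emeasure[OF assms(2), of ?S] by simp
  then show ?thesis
    by (simp add: emeasure_eq_measure zero_less_measure_iff)
qed

lemma square_integrable_smean:
  "(\<And>i. i \<le> N \<Longrightarrow> square_integrable M (\<lambda>\<omega>. x \<omega> i)) \<Longrightarrow> square_integrable M (\<lambda>\<omega>. smean N (x \<omega>))"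
  using square_integrable_cmult[OF square_integrable_sum, of "{..N}" M "\<lambda>i \<omega>. x \<omega> i" "1 / real (N + 1)"]
  by (simp add: smean_def)

lemma integrable_svar:
  assumes "\<And>i. i \<le> N \<Longrightarrow> square_integrable M (\<lambda>\<omega>. x \<omega> i)"
  shows "integrable M (\<lambda>\<omega>. svar N (x \<omega>))"
proof -
  have "square_integrable M (\<lambda>\<omega>. x \<omega> i - smean N (x \<omega>))" if "i \<le> N" for i
    using assms that by (intro square_integrable_diff square_integrable_smean) auto
  then show ?thesis
    unfolding svar_def
    by (intro integrable_divide_zero Bochner_Integration.integrable_sum integrable_square) auto
qed

lemma (in prob_space) expectation_square_sum_uncorrelated:
  assumes "finite J" and sq: "\<And>i. i \<in> J \<Longrightarrow> square_integrable M (Z i)"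
    and uncorr: "\<And>i j. i \<in> J \<Longrightarrow> j \<in> J \<Longrightarrow> i \<noteq> j \<Longrightarrow> expectation (\<lambda>\<omega>. Z i \<omega> * Z j \<omega>) = 0"
  shows "expectation (\<lambda>\<omega>. (\<Sum>i\<in>J. Z i \<omega>)^2) = (\<Sum>i\<in>J. expectation (\<lambda>\<omega>. (Z i \<omega>)^2))"
proof -
  have int: "integrable M (\<lambda>\<omega>. Z i \<omega> * Z j \<omega>)" if "i \<in> J" "j \<in> J" for i j
    using sq that by (intro integrable_mult_square_integrable)
  have row: "(\<Sum>j\<in>J. expectation (\<lambda>\<omega>. Z i \<omega> * Z j \<omega>)) = expectation (\<lambda>\<omega>. (Z i \<omega>)^2)"
    if "i \<in> J" for i
  proof -
    have "(\<Sum>j\<in>J. expectation (\<lambda>\<omega>. Z i \<omega> * Z j \<omega>))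
        = (\<Sum>j\<in>J. if j = i then expectation (\<lambda>\<omega>. (Z i \<omega>)^2) else 0)"
      using uncorr[OF that] by (intro sum.cong) (auto simp: power2_eq_square)
    then show ?thesis
      using that assms(1) by (simp add: sum.delta')
  qed
  have "expectation (\<lambda>\<omega>. (\<Sum>i\<in>J. Z i \<omega>)^2) = expectation (\<lambda>\<omega>. \<Sum>i\<in>J. \<Sum>j\<in>J. Z i \<omega> * Z j \<omega>)"
    by (simp add: power2_eq_square sum_product)
  also have "\<dots> = (\<Sum>i\<in>J. expectation (\<lambda>\<omega>. \<Sum>j\<in>J. Z i \<omega> * Z j \<omega>))"
    using int by (intro Bochner_Integration.integral_sum Bochner_Integration.integrable_sum) auto
  also have "\<dots> = (\<Sum>i\<in>J. \<Sum>j\<in>J. expectation (\<lambda>\<omega>. Z i \<omega> * Z j \<omega>))"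
    using int by (intro sum.cong refl Bochner_Integration.integral_sum) auto
  finally show ?thesis
    using row by simp
qed

lemma (in prob_space) expectation_svar_uncorrelated:
  assumes "1 \<le> N"
    and sq: "\<And>i. i \<le> N \<Longrightarrow> square_integrable M (Z i)"
    and moment2: "\<And>i. i \<le> N \<Longrightarrow> expectation (\<lambda>\<omega>. (Z i \<omega>)^2) = s"
    and uncorr: "\<And>i j. i \<le> N \<Longrightarrow> j \<le> N \<Longrightarrow> i \<noteq> j \<Longrightarrow> expectation (\<lambda>\<omega>. Z i \<omega> * Z j \<omega>) = 0"
  shows "expectation (\<lambda>\<omega>. svar N (\<lambda>i. Z i \<omega>)) = s"
proof -
  have int: "integrable M (\<lambda>\<omega>. (Z i \<omega>)^2)" if "i \<le> N" for i
    using sq[OF that] by (rule integrable_square)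
  have "integrable M (\<lambda>\<omega>. \<Sum>i\<le>N. (Z i \<omega>)^2)"
    using int by (intro Bochner_Integration.integrable_sum) auto
  moreover have "expectation (\<lambda>\<omega>. \<Sum>i\<le>N. (Z i \<omega>)^2) = real (N + 1) * s"
    using int moment2 by simp
  moreover have "integrable M (\<lambda>\<omega>. (\<Sum>i\<le>N. Z i \<omega>)^2)"
    using sq by (intro integrable_square square_integrable_sum) auto
  moreover have "expectation (\<lambda>\<omega>. (\<Sum>i\<le>N. Z i \<omega>)^2) = real (N + 1) * s"
    using expectation_square_sum_uncorrelated[of "{..N}" Z] sq uncorr moment2 by simp
  ultimately have "expectation (\<lambda>\<omega>. svar N (\<lambda>i. Z i \<omega>))
      = (real (N + 1) * s - real (N + 1) * s / real (N + 1)) / real N"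
    unfolding svar_eq_sums[of N] by simp
  also have "\<dots> = s"
  proof -
    have "real (N + 1) * s / real (N + 1) = s" "real N \<noteq> 0"
      using assms(1) by simp_all
    then show ?thesis
      by (simp add: algebra_simps)
  qed
  finally show ?thesis .
qed

lemma integrable_analysis_var:
  assumes "D \<noteq> 0" "integrable M p" "\<And>\<omega>. \<omega> \<in> space M \<Longrightarrow> 0 \<le> p \<omega>"
  shows "integrable M (\<lambda>\<omega>. analysis_var C D (p \<omega>))"
proof -
  note [measurable] = borel_measurable_integrable[OF assms(2)]
  show ?thesis
    using assms analysis_var_nonneg[OF _ assms(1)] analysis_var_le[OF _ assms(1)]
    by (intro Bochner_Integration.integrable_bound[OF assms(2)] AE_I2) (auto simp: analysis_var_def)
qed

lemma (in prob_space) expectation_analysis_var_less: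
  assumes "C \<noteq> 0" "D \<noteq> 0" "0 < q"
    and p: "integrable M p" "\<And>\<omega>. \<omega> \<in> space M \<Longrightarrow> 0 \<le> p \<omega>"
    and "expectation p \<le> q"
    and "expectation p < q \<or> 0 < prob {\<omega> \<in> space M. p \<omega> \<le> q / 2}"
  shows "expectation (\<lambda>\<omega>. analysis_var C D (p \<omega>)) < analysis_var C D q"
proof -
  note [measurable] = borel_measurable_integrable[OF p(1)]
  define s where "s = (D^2 / (C^2 * q + D^2))^2"
  define c where "c = C^2 * (D^2)^2 * (q / 2)^2 / (C^2 * q + D^2)^3"
  define r where "r \<omega> = analysis_var C D q + s * (p \<omega> - q) - analysis_var C D (p \<omega>)" for \<omega>
  define E where "E = {\<omega> \<in> space M. p \<omega> \<le> q / 2}"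
  have "0 < s" "0 < c"
    using assms(1-3) innovation_var_pos[of q D C] unfolding s_def c_def by auto
  have int_f: "integrable M (\<lambda>\<omega>. analysis_var C D (p \<omega>))"
    using assms(2) p by (rule integrable_analysis_var)
  have r_ge: "c * indicator E \<omega> \<le> r \<omega>" if "\<omega> \<in> space M" for \<omega>
    using analysis_var_le_tangent[OF p(2)[OF that] _ assms(2), of q C]
      analysis_var_tangent_gap_ge[OF assms(2) p(2)[OF that], of q C] assms(3)
    unfolding r_def s_def c_def E_def by (auto split: split_indicator)
  have "E \<in> sets M"
    unfolding E_def by measurable
  moreover have "integrable M (indicator E :: 'a \<Rightarrow> real)"
    using \<open>E \<in> sets M\<close> by (intro integrable_real_indicator) (simp_all add: emeasure_eq_measure)
  moreover have "integrable M r"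
    unfolding r_def using int_f p(1) by simp
  ultimately have "expectation (\<lambda>\<omega>. c * indicator E \<omega>) \<le> expectation r"
    using r_ge by (intro integral_mono) auto
  then have "c * prob E \<le> expectation r"
    using \<open>E \<in> sets M\<close> by simp
  moreover have "expectation r = analysis_var C D q + s * (expectation p - q)
      - expectation (\<lambda>\<omega>. analysis_var C D (p \<omega>))"
    unfolding r_def using int_f p(1) by (simp add: prob_space)
  moreover have "s * (expectation p - q) \<le> 0" "0 \<le> c * prob E"
    using assms(6) \<open>0 < s\<close> \<open>0 < c\<close> by (simp_all add: mult_nonneg_nonpos)
  moreover have "s * (expectation p - q) < 0 \<or> 0 < c * prob E"
    using assms(7) \<open>0 < s\<close> \<open>0 < c\<close> unfolding E_def by (auto simp: mult_pos_neg)
  ultimately show ?thesis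
    by linarith
qed

section \<open>Functions of an independent family\<close>

locale indep_family = prob_space +
  fixes X :: "'i \<Rightarrow> 'a \<Rightarrow> real" and I :: "'i set"
  assumes indep_vars_X: "indep_vars (\<lambda>_. borel) X I"
begin

lemma measurable_X: "i \<in> I \<Longrightarrow> X i \<in> borel_measurable M"
  using indep_vars_X by (simp add: indep_vars_def)

text \<open>The factorisation is demanded everywhere, not only on \<open>space M\<close>: the quantities of the
  filter are built pointwise from the primitive variables, and this keeps the closure rules trivial.\<close>

definition determined_by :: "'i set \<Rightarrow> ('a \<Rightarrow> real) \<Rightarrow> bool" where
  "determined_by K f \<longleftrightarrow>
    (\<exists>F \<in> borel_measurable (Pi\<^sub>M K (\<lambda>_. borel)). f = (\<lambda>\<omega>. F (\<lambda>k\<in>K. X k \<omega>)))"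

lemma determined_by_X: "k \<in> K \<Longrightarrow> determined_by K (X k)"
  unfolding determined_by_def by (intro bexI[of _ "\<lambda>u. u k"]) auto

lemma determined_by_const: "determined_by K (\<lambda>_. c)"
  unfolding determined_by_def by (intro bexI[of _ "\<lambda>_. c"]) auto

lemma determined_by_compose:
  assumes "determined_by K f" "h \<in> borel_measurable borel"
  shows "determined_by K (\<lambda>\<omega>. h (f \<omega>))"
proof -
  obtain F where "F \<in> borel_measurable (Pi\<^sub>M K (\<lambda>_. borel))" "f = (\<lambda>\<omega>. F (\<lambda>k\<in>K. X k \<omega>))"
    using assms(1) unfolding determined_by_def by blast
  then show ?thesis
    unfolding determined_by_def using assms(2)
    by (intro bexI[of _ "\<lambda>u. h (F u)"]) (auto intro: measurable_compose)
qed

lemma determined_by_compose2: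
  assumes "determined_by K f" "determined_by K g"
    and "(\<lambda>x. h (fst x) (snd x)) \<in> borel_measurable (borel \<Otimes>\<^sub>M borel)"
  shows "determined_by K (\<lambda>\<omega>. h (f \<omega>) (g \<omega>))"
proof -
  obtain F G where "F \<in> borel_measurable (Pi\<^sub>M K (\<lambda>_. borel))" "f = (\<lambda>\<omega>. F (\<lambda>k\<in>K. X k \<omega>))"
    and "G \<in> borel_measurable (Pi\<^sub>M K (\<lambda>_. borel))" "g = (\<lambda>\<omega>. G (\<lambda>k\<in>K. X k \<omega>))"
    using assms(1,2) unfolding determined_by_def by blast
  moreover from this have "(\<lambda>u. h (F u) (G u)) \<in> borel_measurable (Pi\<^sub>M K (\<lambda>_. borel))"
    using measurable_compose[OF measurable_Pair assms(3)] by simp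
  ultimately show ?thesis
    unfolding determined_by_def by (intro bexI[of _ "\<lambda>u. h (F u) (G u)"]) simp_all
qed

lemma determined_by_add:
  assumes "determined_by K f" "determined_by K g"
  shows "determined_by K (\<lambda>\<omega>. f \<omega> + g \<omega>)"
  using assms by (rule determined_by_compose2) measurable

lemma determined_by_diff:
  assumes "determined_by K f" "determined_by K g"
  shows "determined_by K (\<lambda>\<omega>. f \<omega> - g \<omega>)"
  using assms by (rule determined_by_compose2) measurable

lemma determined_by_mult:
  assumes "determined_by K f" "determined_by K g"
  shows "determined_by K (\<lambda>\<omega>. f \<omega> * g \<omega>)"
  using assms by (rule determined_by_compose2) measurable

lemma determined_by_divide:
  assumes "determined_by K f" "determined_by K g"
  shows "determined_by K (\<lambda>\<omega>. f \<omega> / g \<omega>)"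
  using assms by (rule determined_by_compose2) measurable

lemma determined_by_power:
  assumes "determined_by K f"
  shows "determined_by K (\<lambda>\<omega>. f \<omega> ^ n)"
  using assms by (rule determined_by_compose) measurable

lemma determined_by_sum:
  assumes "finite J" "\<And>j. j \<in> J \<Longrightarrow> determined_by K (f j)"
  shows "determined_by K (\<lambda>\<omega>. \<Sum>j\<in>J. f j \<omega>)"
  using assms
proof (induction J rule: finite_induct)
  case (insert j J)
  have "determined_by K (f j)"
    using insert.prems by simp
  moreover have "determined_by K (\<lambda>\<omega>. \<Sum>j\<in>J. f j \<omega>)"
    using insert.IH insert.prems by simp
  ultimately have "determined_by K (\<lambda>\<omega>. f j \<omega> + (\<Sum>j\<in>J. f j \<omega>))"
    by (rule determined_by_add)
  with insert.hyps show ?case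
    by simp
qed (simp add: determined_by_const)

lemma determined_by_smean:
  "(\<And>i. i \<le> N \<Longrightarrow> determined_by K (\<lambda>\<omega>. x \<omega> i)) \<Longrightarrow> determined_by K (\<lambda>\<omega>. smean N (x \<omega>))"
  unfolding smean_def by (intro determined_by_divide determined_by_sum determined_by_const) auto

lemma determined_by_svar:
  "(\<And>i. i \<le> N \<Longrightarrow> determined_by K (\<lambda>\<omega>. x \<omega> i)) \<Longrightarrow> determined_by K (\<lambda>\<omega>. svar N (x \<omega>))"
  unfolding svar_def
  by (intro determined_by_divide determined_by_sum determined_by_power determined_by_diff
      determined_by_smean determined_by_const) auto

lemma determined_by_gain: "determined_by K f \<Longrightarrow> determined_by K (\<lambda>\<omega>. gain C D (f \<omega>))"
  unfolding gain_def
  by (intro determined_by_divide determined_by_mult determined_by_add determined_by_power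
      determined_by_const)

lemma determined_by_mono:
  assumes "K \<subseteq> L" "determined_by K f"
  shows "determined_by L f"
proof -
  obtain F where F: "F \<in> borel_measurable (Pi\<^sub>M K (\<lambda>_. borel))" "f = (\<lambda>\<omega>. F (\<lambda>k\<in>K. X k \<omega>))"
    using assms(2) unfolding determined_by_def by blast
  have "(\<lambda>u. F (restrict u K)) \<in> borel_measurable (Pi\<^sub>M L (\<lambda>_. borel))"
    using measurable_comp[OF measurable_restrict_subset[OF assms(1)] F(1)] by (simp add: comp_def)
  moreover have "restrict (\<lambda>k\<in>L. X k \<omega>) K = (\<lambda>k\<in>K. X k \<omega>)" for \<omega>
    using assms(1) by (auto simp: restrict_def fun_eq_iff)
  ultimately show ?thesis
    unfolding determined_by_def F(2) by (intro bexI[of _ "\<lambda>u. F (restrict u K)"]) auto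
qed

lemma determined_by_measurable:
  assumes "K \<subseteq> I" "determined_by K f"
  shows "f \<in> borel_measurable M"
proof -
  obtain F where F: "F \<in> borel_measurable (Pi\<^sub>M K (\<lambda>_. borel))" "f = (\<lambda>\<omega>. F (\<lambda>k\<in>K. X k \<omega>))"
    using assms(2) unfolding determined_by_def by blast
  have "(\<lambda>\<omega>. \<lambda>k\<in>K. X k \<omega>) \<in> measurable M (Pi\<^sub>M K (\<lambda>_. borel))"
    using assms(1) measurable_X by (intro measurable_restrict) auto
  then show ?thesis
    unfolding F(2) using F(1) by (rule measurable_compose)
qed

lemma indep_var_determined_by:
  assumes "K \<inter> L = {}" "K \<subseteq> I" "L \<subseteq> I" "determined_by K f" "determined_by L g"
  shows "indep_var borel f borel g"
proof -
  obtain F G where F: "F \<in> borel_measurable (Pi\<^sub>M K (\<lambda>_. borel))" "f = (\<lambda>\<omega>. F (\<lambda>k\<in>K. X k \<omega>))"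
    and G: "G \<in> borel_measurable (Pi\<^sub>M L (\<lambda>_. borel))" "g = (\<lambda>\<omega>. G (\<lambda>k\<in>L. X k \<omega>))"
    using assms(4,5) unfolding determined_by_def by blast
  have "indep_var borel (F \<circ> (\<lambda>\<omega>. \<lambda>k\<in>K. X k \<omega>)) borel (G \<circ> (\<lambda>\<omega>. \<lambda>k\<in>L. X k \<omega>))"
    by (rule indep_var_compose[OF indep_var_restrict[OF indep_vars_X assms(1-3)] F(1) G(1)])
  then show ?thesis
    unfolding F(2) G(2) comp_def .
qed

lemma expectation_sum_mult_indep_centered:
  assumes "K \<inter> L = {}" "K \<subseteq> I" "L \<subseteq> I" "finite J"
    and "\<And>j. j \<in> J \<Longrightarrow> determined_by K (h j)" "\<And>j. j \<in> J \<Longrightarrow> determined_by L (v j)"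
    and "\<And>j. j \<in> J \<Longrightarrow> square_integrable M (h j)" "\<And>j. j \<in> J \<Longrightarrow> square_integrable M (v j)"
    and "\<And>j. j \<in> J \<Longrightarrow> expectation (v j) = 0"
  shows "integrable M (\<lambda>\<omega>. \<Sum>j\<in>J. h j \<omega> * v j \<omega>)" "expectation (\<lambda>\<omega>. \<Sum>j\<in>J. h j \<omega> * v j \<omega>) = 0"
proof -
  have "indep_var borel (h j) borel (v j)" if "j \<in> J" for j
    using assms(1-3) assms(5,6)[OF that] by (rule indep_var_determined_by)
  then have "expectation (\<lambda>\<omega>. h j \<omega> * v j \<omega>) = 0" if "j \<in> J" for j
    using that assms(7-9) by (simp add: indep_var_lebesgue_integral integrable_of_square_integrable)
  moreover have int: "integrable M (\<lambda>\<omega>. h j \<omega> * v j \<omega>)" if "j \<in> J" for j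
    using that assms(7,8) by (simp add: integrable_mult_square_integrable)
  ultimately show "integrable M (\<lambda>\<omega>. \<Sum>j\<in>J. h j \<omega> * v j \<omega>)" "expectation (\<lambda>\<omega>. \<Sum>j\<in>J. h j \<omega> * v j \<omega>) = 0"
    by (simp_all add: Bochner_Integration.integrable_sum Bochner_Integration.integral_sum)
qed

lemma prob_Inter_indep_pos:
  assumes "J \<noteq> {}" "finite J" "J \<subseteq> I" "\<And>j. j \<in> J \<Longrightarrow> S j \<in> sets borel"
    and "\<And>j. j \<in> J \<Longrightarrow> 0 < prob (X j -` S j \<inter> space M)"
  shows "0 < prob (\<Inter>j\<in>J. X j -` S j \<inter> space M)"
  using indep_varsD[OF indep_vars_X assms(1-4)] assms(5) by (simp add: prod_pos)

lemma expectation_svar_indep: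
  assumes "1 \<le> N" "inj_on k {..N}" "k ` {..N} \<subseteq> I"
    and det: "\<And>i. i \<le> N \<Longrightarrow> determined_by {k i} (Z i)"
    and sq: "\<And>i. i \<le> N \<Longrightarrow> square_integrable M (Z i)"
    and mean: "\<And>i. i \<le> N \<Longrightarrow> expectation (Z i) = 0"
    and moment2: "\<And>i. i \<le> N \<Longrightarrow> expectation (\<lambda>\<omega>. (Z i \<omega>)^2) = s"
  shows "expectation (\<lambda>\<omega>. svar N (\<lambda>i. Z i \<omega>)) = s"
proof (rule expectation_svar_uncorrelated[OF assms(1) sq moment2])
  fix i j assume ij: "i \<le> N" "j \<le> N" "i \<noteq> j"
  then have "indep_var borel (Z i) borel (Z j)"
    using assms(2,3) by (intro indep_var_determined_by[of "{k i}" "{k j}"] det) (auto dest: inj_onD)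
  then show "expectation (\<lambda>\<omega>. Z i \<omega> * Z j \<omega>) = 0"
    using ij by (simp add: indep_var_lebesgue_integral integrable_of_square_integrable sq mean)
qed

end

section \<open>The ensemble Kalman filter\<close>

locale enkf_setting = indep_family M "rv_of X0 W V xi0 Vp Wp" "labels N"
  for M :: "'a measure" and X0 :: "'a \<Rightarrow> real" and W V xi0 :: "nat \<Rightarrow> 'a \<Rightarrow> real"
    and Vp Wp :: "nat \<Rightarrow> nat \<Rightarrow> 'a \<Rightarrow> real" and N :: nat +
  fixes A B C D P0 m0 :: real
  assumes A_nonzero: "A \<noteq> 0" and B_nonzero: "B \<noteq> 0"
    and C_nonzero: "C \<noteq> 0" and D_nonzero: "D \<noteq> 0"
    and P0_pos: "0 < P0" and N_ge_1: "1 \<le> N"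
    and distr_X0: "distributed M lborel X0 (normal_density m0 (sqrt P0))"
    and distr_xi0: "\<And>i. i \<le> N \<Longrightarrow> distributed M lborel (xi0 i) (normal_density m0 (sqrt P0))"
    and distr_W: "\<And>k. distributed M lborel (W k) std_normal_density"
    and distr_V: "\<And>k. distributed M lborel (V k) std_normal_density"
    and distr_Wp: "\<And>i k. i \<le> N \<Longrightarrow> distributed M lborel (Wp i k) std_normal_density"
    and distr_Vp: "\<And>i k. i \<le> N \<Longrightarrow> distributed M lborel (Vp i k) std_normal_density"
begin

text \<open>In the notation of the paper, \<open>forecast n \<omega> i\<close> and \<open>analysed n \<omega> i\<close> are
  xi^i_n and hat xi^i_n, \<open>fvar\<close>, \<open>avar\<close> and \<open>egain\<close> are p_n, hat p_n and g_n, and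
  \<open>vpert n\<close>, \<open>wpert n\<close> are the perturbations V^i_n and W^i_(n+1).\<close>

definition "forecast n \<omega> = enkf A B C D N X0 W V xi0 Vp Wp n \<omega>"
definition "obs n = obsY A B C D X0 W V n"
definition "vpert n \<omega> = (\<lambda>i. Vp i n \<omega>)"
definition "wpert n \<omega> = (\<lambda>i. Wp i (Suc n) \<omega>)"
definition "analysed n \<omega> = analysis C D N (obs n \<omega>) (vpert n \<omega>) (forecast n \<omega>)"
definition "fvar n \<omega> = svar N (forecast n \<omega>)"
definition "avar n \<omega> = svar N (analysed n \<omega>)"
definition "egain n \<omega> = gain C D (fvar n \<omega>)"

lemma forecast_0: "forecast 0 \<omega> i = xi0 i \<omega>"
  by (simp add: forecast_def)

lemma forecast_Suc: "forecast (Suc n) \<omega> i = A * analysed n \<omega> i + B * wpert n \<omega> i"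
  by (simp add: forecast_def analysed_def obs_def vpert_def wpert_def)

lemma analysed_eq:
  "analysed n \<omega> i = forecast n \<omega> i + egain n \<omega> * (obs n \<omega> - C * forecast n \<omega> i - D * vpert n \<omega> i)"
  by (simp add: analysed_def analysis_def egain_def fvar_def)

lemma fvar_nonneg: "0 \<le> fvar n \<omega>"
  by (simp add: fvar_def svar_nonneg)

lemma abs_egain_le: "\<bar>egain n \<omega>\<bar> \<le> 1 / \<bar>C\<bar>"
  unfolding egain_def by (rule abs_gain_le[OF fvar_nonneg C_nonzero])

lemma one_minus_egain_mult_bounds: "0 \<le> 1 - egain n \<omega> * C" "1 - egain n \<omega> * C \<le> 1"
  unfolding egain_def using one_minus_gain_mult_bounds[OF fvar_nonneg D_nonzero] by auto

text \<open>The forecast labels include the whole signal and observation path, since only the fresh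
  perturbations need to be independent of the forecast ensemble.\<close>

definition forecast_labels :: "nat \<Rightarrow> rvlabel set" where
  "forecast_labels n = {LX0} \<union> range LW \<union> range LV \<union> LXi ` {..N}
     \<union> {LVp i k | i k. i \<le> N \<and> k < n} \<union> {LWp i k | i k. i \<le> N \<and> k \<le> n}"

definition "vpert_labels n = {LVp i n | i. i \<le> N}"
definition "wpert_labels n = {LWp i (Suc n) | i. i \<le> N}"

lemma forecast_labels_subset: "forecast_labels n \<subseteq> labels N"
  unfolding forecast_labels_def labels_def by auto

lemma vpert_labels_subset: "vpert_labels n \<subseteq> labels N"
  unfolding vpert_labels_def labels_def by auto

lemma wpert_labels_subset: "wpert_labels n \<subseteq> labels N"
  unfolding wpert_labels_def labels_def by auto

lemma forecast_labels_disjoint_vpert: "forecast_labels n \<inter> vpert_labels n = {}"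
  unfolding forecast_labels_def vpert_labels_def by auto

lemma analysis_labels_disjoint_wpert: "(forecast_labels n \<union> vpert_labels n) \<inter> wpert_labels n = {}"
  unfolding forecast_labels_def vpert_labels_def wpert_labels_def by auto

lemma forecast_labels_Suc: "forecast_labels n \<union> vpert_labels n \<union> wpert_labels n \<subseteq> forecast_labels (Suc n)"
  unfolding forecast_labels_def vpert_labels_def wpert_labels_def by auto

lemma determined_by_vpert: "i \<le> N \<Longrightarrow> determined_by (vpert_labels n) (\<lambda>\<omega>. vpert n \<omega> i)"
  using determined_by_X[of "LVp i n" "vpert_labels n"] by (simp add: vpert_labels_def vpert_def)

lemma determined_by_wpert: "i \<le> N \<Longrightarrow> determined_by (wpert_labels n) (\<lambda>\<omega>. wpert n \<omega> i)"
  using determined_by_X[of "LWp i (Suc n)" "wpert_labels n"] by (simp add: wpert_labels_def wpert_def)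

lemma determined_by_obs:
  assumes "{LX0} \<union> range LW \<union> range LV \<subseteq> K"
  shows "determined_by K (obs n)"
proof -
  have "determined_by K (sigX A B X0 W k)" for k
  proof (induction k)
    case 0
    show ?case
      using determined_by_X[of LX0 K] assms by auto
  next
    case (Suc k)
    have "determined_by K (W (Suc k))"
      using determined_by_X[of "LW (Suc k)" K] assms by auto
    then show ?case
      unfolding sigX.simps by (intro determined_by_add determined_by_mult determined_by_const Suc.IH)
  qed
  moreover have "determined_by K (V n)"
    using determined_by_X[of "LV n" K] assms by auto
  ultimately show ?thesis
    unfolding obs_def obsY_def[abs_def]
    by (intro determined_by_add determined_by_mult determined_by_const)
qed

lemma determined_by_analysed_of_forecast:
  assumes forecast: "\<And>j. j \<le> N \<Longrightarrow> determined_by K (\<lambda>\<omega>. forecast n \<omega> j)"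
    and K: "{LX0} \<union> range LW \<union> range LV \<union> vpert_labels n \<subseteq> K" and "i \<le> N"
  shows "determined_by K (\<lambda>\<omega>. analysed n \<omega> i)"
proof -
  have "determined_by K (egain n)"
    unfolding egain_def[abs_def] fvar_def by (intro determined_by_gain determined_by_svar forecast)
  moreover have "determined_by K (\<lambda>\<omega>. vpert n \<omega> i)"
    using determined_by_mono[OF _ determined_by_vpert[OF \<open>i \<le> N\<close>]] K by blast
  ultimately show ?thesis
    unfolding analysed_eq using K \<open>i \<le> N\<close>
    by (intro determined_by_add determined_by_mult determined_by_diff determined_by_const
        determined_by_obs forecast) auto
qed

lemma determined_by_forecast: "i \<le> N \<Longrightarrow> determined_by (forecast_labels n) (\<lambda>\<omega>. forecast n \<omega> i)"
proof (induction n arbitrary: i)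
  case 0
  then show ?case
    using determined_by_X[of "LXi i" "forecast_labels 0"] by (simp add: forecast_labels_def forecast_0)
next
  case (Suc n)
  have "determined_by (forecast_labels (Suc n)) (\<lambda>\<omega>. analysed n \<omega> i)"
    using forecast_labels_Suc Suc
    by (intro determined_by_analysed_of_forecast determined_by_mono[OF _ Suc.IH])
      (auto simp: forecast_labels_def)
  moreover have "determined_by (forecast_labels (Suc n)) (\<lambda>\<omega>. wpert n \<omega> i)"
    using forecast_labels_Suc determined_by_mono[OF _ determined_by_wpert[OF Suc.prems]] by blast
  ultimately show ?case
    unfolding forecast_Suc by (intro determined_by_add determined_by_mult determined_by_const)
qed

lemma determined_by_analysed:
  "i \<le> N \<Longrightarrow> determined_by (forecast_labels n \<union> vpert_labels n) (\<lambda>\<omega>. analysed n \<omega> i)"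
  by (intro determined_by_analysed_of_forecast determined_by_mono[OF _ determined_by_forecast])
    (auto simp: forecast_labels_def)

lemma determined_by_fvar: "determined_by (forecast_labels n) (fvar n)"
  unfolding fvar_def[abs_def] by (intro determined_by_svar determined_by_forecast)

lemma determined_by_egain: "determined_by (forecast_labels n) (egain n)"
  unfolding egain_def[abs_def] by (intro determined_by_gain determined_by_fvar)

lemma measurable_fvar[measurable]: "fvar n \<in> borel_measurable M"
  by (rule determined_by_measurable[OF forecast_labels_subset determined_by_fvar])

lemma measurable_egain[measurable]: "egain n \<in> borel_measurable M"
  by (rule determined_by_measurable[OF forecast_labels_subset determined_by_egain])

lemma square_integrable_std_normal:
  "distributed M lborel Y std_normal_density \<Longrightarrow> square_integrable M Y"
  using square_integrable_normal[of 1 Y 0] by simp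

lemma square_integrable_xi0: "i \<le> N \<Longrightarrow> square_integrable M (xi0 i)"
  using P0_pos by (intro square_integrable_normal[OF _ distr_xi0]) auto

lemma square_integrable_obs: "square_integrable M (obs n)"
proof -
  have "square_integrable M (sigX A B X0 W k)" for k
  proof (induction k)
    case 0
    show ?case
      using P0_pos by (simp add: square_integrable_normal[OF _ distr_X0])
  next
    case (Suc k)
    then show ?case
      using square_integrable_std_normal[OF distr_W]
      by (simp add: square_integrable_add square_integrable_cmult)
  qed
  moreover have "square_integrable M (V n)"
    using square_integrable_std_normal[OF distr_V] .
  ultimately show ?thesis
    unfolding obs_def obsY_def[abs_def] by (intro square_integrable_add square_integrable_cmult)
qed

lemma square_integrable_vpert: "i \<le> N \<Longrightarrow> square_integrable M (\<lambda>\<omega>. vpert n \<omega> i)"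
  using square_integrable_std_normal[OF distr_Vp] by (simp add: vpert_def)

lemma square_integrable_wpert: "i \<le> N \<Longrightarrow> square_integrable M (\<lambda>\<omega>. wpert n \<omega> i)"
  using square_integrable_std_normal[OF distr_Wp] by (simp add: wpert_def)

lemma square_integrable_analysed_of_forecast:
  assumes "\<And>j. j \<le> N \<Longrightarrow> square_integrable M (\<lambda>\<omega>. forecast n \<omega> j)" "i \<le> N"
  shows "square_integrable M (\<lambda>\<omega>. analysed n \<omega> i)"
  unfolding analysed_eq
  by (intro square_integrable_add square_integrable_bounded_mult[OF measurable_egain abs_egain_le]
      square_integrable_diff square_integrable_cmult square_integrable_obs square_integrable_vpert assms)

lemma square_integrable_forecast: "i \<le> N \<Longrightarrow> square_integrable M (\<lambda>\<omega>. forecast n \<omega> i)"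
proof (induction n arbitrary: i)
  case 0
  then show ?case
    by (simp add: forecast_0 square_integrable_xi0)
next
  case (Suc n)
  then show ?case
    unfolding forecast_Suc
    by (intro square_integrable_add square_integrable_cmult square_integrable_wpert
        square_integrable_analysed_of_forecast)
qed

lemma square_integrable_analysed: "i \<le> N \<Longrightarrow> square_integrable M (\<lambda>\<omega>. analysed n \<omega> i)"
  by (intro square_integrable_analysed_of_forecast square_integrable_forecast)

lemma integrable_fvar: "integrable M (fvar n)"
  unfolding fvar_def[abs_def] by (intro integrable_svar square_integrable_forecast)

lemma integrable_avar: "integrable M (avar n)"
  unfolding avar_def[abs_def] by (intro integrable_svar square_integrable_analysed)

lemma avar_eq:
  "avar n \<omega> = analysis_var C D (fvar n \<omega>) + D^2 * ((egain n \<omega>)^2 * (svar N (vpert n \<omega>) - 1))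
    - 2 * D / real N * (\<Sum>i\<le>N. (1 - egain n \<omega> * C) * egain n \<omega>
        * (forecast n \<omega> i - smean N (forecast n \<omega>)) * vpert n \<omega> i)"
proof -
  let ?g = "egain n \<omega>"
  have affine: "analysed n \<omega>
      = (\<lambda>i. (1 - ?g * C) * forecast n \<omega> i + (- (?g * D)) * vpert n \<omega> i + ?g * obs n \<omega>)"
    by (simp add: fun_eq_iff analysed_eq algebra_simps)
  have "avar n \<omega> = (1 - ?g * C)^2 * fvar n \<omega> + D^2 * (?g^2 * svar N (vpert n \<omega>))
      - 2 * D / real N * ((1 - ?g * C) * ?g
        * (\<Sum>i\<le>N. (forecast n \<omega> i - smean N (forecast n \<omega>)) * vpert n \<omega> i))"
    unfolding avar_def affine svar_affine scov_eq fvar_def by (simp add: power2_eq_square algebra_simps)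
  moreover have "(1 - ?g * C)^2 * fvar n \<omega> = analysis_var C D (fvar n \<omega>) - D^2 * ?g^2"
    using analysis_var_eq_gain_square[where C = C, OF fvar_nonneg[of n \<omega>] D_nonzero]
    unfolding egain_def by linarith
  ultimately show ?thesis
    by (simp add: sum_distrib_left mult.assoc algebra_simps)
qed

lemma fvar_Suc_eq:
  "fvar (Suc n) \<omega> = A^2 * avar n \<omega> + B^2 + B^2 * (svar N (wpert n \<omega>) - 1)
    + 2 * A * B / real N * (\<Sum>i\<le>N. (analysed n \<omega> i - smean N (analysed n \<omega>)) * wpert n \<omega> i)"
proof -
  have affine: "forecast (Suc n) \<omega> = (\<lambda>i. A * analysed n \<omega> i + B * wpert n \<omega> i + 0)"
    by (simp add: fun_eq_iff forecast_Suc)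
  show ?thesis
    unfolding fvar_def affine svar_affine scov_eq avar_def by (simp add: algebra_simps)
qed

lemma expectation_std_normal:
  assumes "distributed M lborel Y std_normal_density"
  shows "expectation Y = 0" "expectation (\<lambda>\<omega>. (Y \<omega>)^2) = 1"
  using standard_normal_distributed_expectation[OF assms] standard_normal_distributed_variance[OF assms]
  by simp_all

lemma expectation_svar_std_normal:
  assumes "inj_on k {..N}" "k ` {..N} \<subseteq> labels N"
    and "\<And>i. i \<le> N \<Longrightarrow> distributed M lborel (rv_of X0 W V xi0 Vp Wp (k i)) std_normal_density"
  shows "expectation (\<lambda>\<omega>. svar N (\<lambda>i. rv_of X0 W V xi0 Vp Wp (k i) \<omega>)) = 1"
  using assms
  by (intro expectation_svar_indep[OF N_ge_1] determined_by_X)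
    (auto intro: square_integrable_std_normal expectation_std_normal)

lemma expectation_svar_vpert: "expectation (\<lambda>\<omega>. svar N (vpert n \<omega>)) = 1"
  using expectation_svar_std_normal[of "\<lambda>i. LVp i n"] distr_Vp
  by (simp add: vpert_def inj_on_def labels_def image_subset_iff)

lemma expectation_svar_wpert: "expectation (\<lambda>\<omega>. svar N (wpert n \<omega>)) = 1"
  using expectation_svar_std_normal[of "\<lambda>i. LWp i (Suc n)"] distr_Wp
  by (simp add: wpert_def inj_on_def labels_def image_subset_iff)

lemma expectation_fvar_0: "expectation (fvar 0) = P0"
proof -
  have "0 < sqrt P0"
    using P0_pos by simp
  have "fvar 0 = (\<lambda>\<omega>. svar N (\<lambda>i. xi0 i \<omega> - m0))"
    using svar_add_const[of N "\<lambda>i. xi0 i _ - m0" m0] by (simp add: fun_eq_iff fvar_def forecast_def)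
  moreover have "expectation (\<lambda>\<omega>. svar N (\<lambda>i. xi0 i \<omega> - m0)) = P0"
  proof (rule expectation_svar_indep[OF N_ge_1, of LXi])
    fix i assume "i \<le> N"
    show "determined_by {LXi i} (\<lambda>\<omega>. xi0 i \<omega> - m0)"
      using determined_by_X[of "LXi i" "{LXi i}"] by (simp add: determined_by_diff determined_by_const)
    show "square_integrable M (\<lambda>\<omega>. xi0 i \<omega> - m0)"
      using \<open>i \<le> N\<close> by (intro square_integrable_diff square_integrable_xi0 square_integrable_const)
    have "expectation (xi0 i) = m0"
      using normal_distributed_expectation[OF \<open>0 < sqrt P0\<close> distr_xi0[OF \<open>i \<le> N\<close>]] .
    then show "expectation (\<lambda>\<omega>. xi0 i \<omega> - m0) = 0"
      using integrable_of_square_integrable[OF square_integrable_xi0[OF \<open>i \<le> N\<close>]] by (simp add: prob_space)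
    show "expectation (\<lambda>\<omega>. (xi0 i \<omega> - m0)^2) = P0"
      using normal_distributed_variance[OF \<open>0 < sqrt P0\<close> distr_xi0[OF \<open>i \<le> N\<close>]] \<open>expectation (xi0 i) = m0\<close>
        P0_pos by simp
  qed (auto simp: inj_on_def labels_def)
  ultimately show ?thesis
    by simp
qed

lemma square_integrable_egain: "square_integrable M (egain n)"
  using square_integrable_bounded_mult[OF measurable_egain abs_egain_le square_integrable_const[of 1]]
  by simp

lemma avar_noise_term_centered:
  "integrable M (\<lambda>\<omega>. (egain n \<omega>)^2 * (svar N (vpert n \<omega>) - 1))"
  "expectation (\<lambda>\<omega>. (egain n \<omega>)^2 * (svar N (vpert n \<omega>) - 1)) = 0"
proof -
  have "indep_var borel (\<lambda>\<omega>. (egain n \<omega>)^2) borel (\<lambda>\<omega>. svar N (vpert n \<omega>) - 1)"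
    by (intro indep_var_determined_by[OF forecast_labels_disjoint_vpert[of n] forecast_labels_subset
          vpert_labels_subset] determined_by_power determined_by_egain determined_by_diff
        determined_by_svar determined_by_vpert determined_by_const)
  moreover have "integrable M (\<lambda>\<omega>. (egain n \<omega>)^2)"
    using square_integrable_egain by (rule integrable_square)
  moreover have "integrable M (\<lambda>\<omega>. svar N (vpert n \<omega>))"
    using square_integrable_vpert by (rule integrable_svar)
  ultimately show "integrable M (\<lambda>\<omega>. (egain n \<omega>)^2 * (svar N (vpert n \<omega>) - 1))"
    "expectation (\<lambda>\<omega>. (egain n \<omega>)^2 * (svar N (vpert n \<omega>) - 1)) = 0"
    using expectation_svar_vpert
    by (simp_all add: indep_var_integrable indep_var_lebesgue_integral prob_space)
qed

lemma avar_cross_term_centered: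
  fixes n :: nat
  defines "h \<equiv> \<lambda>i \<omega>. (1 - egain n \<omega> * C) * egain n \<omega> * (forecast n \<omega> i - smean N (forecast n \<omega>))"
  shows "integrable M (\<lambda>\<omega>. \<Sum>i\<le>N. h i \<omega> * vpert n \<omega> i)"
    "expectation (\<lambda>\<omega>. \<Sum>i\<le>N. h i \<omega> * vpert n \<omega> i) = 0"
proof -
  have "square_integrable M (h i)" if "i \<le> N" for i
  proof -
    have "\<bar>(1 - egain n \<omega> * C) * egain n \<omega>\<bar> \<le> 1 * (1 / \<bar>C\<bar>)" for \<omega>
      unfolding abs_mult using one_minus_egain_mult_bounds abs_egain_le by (intro mult_mono) auto
    then show ?thesis
      unfolding h_def using that
      by (intro square_integrable_bounded_mult[of _ _ "1 / \<bar>C\<bar>"] square_integrable_diff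
          square_integrable_smean square_integrable_forecast) auto
  qed
  moreover have "determined_by (forecast_labels n) (h i)" if "i \<le> N" for i
    unfolding h_def using that
    by (intro determined_by_mult determined_by_diff determined_by_const determined_by_egain
        determined_by_smean determined_by_forecast)
  moreover have "expectation (\<lambda>\<omega>. vpert n \<omega> i) = 0" if "i \<le> N" for i
    using expectation_std_normal(1)[OF distr_Vp[OF that]] by (simp add: vpert_def)
  ultimately show "integrable M (\<lambda>\<omega>. \<Sum>i\<le>N. h i \<omega> * vpert n \<omega> i)"
    "expectation (\<lambda>\<omega>. \<Sum>i\<le>N. h i \<omega> * vpert n \<omega> i) = 0"
    using expectation_sum_mult_indep_centered[OF forecast_labels_disjoint_vpert[of n]
        forecast_labels_subset vpert_labels_subset finite_atMost[of N], of h "\<lambda>i \<omega>. vpert n \<omega> i"]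
      determined_by_vpert square_integrable_vpert by auto
qed

lemma fvar_Suc_cross_term_centered:
  fixes n :: nat
  defines "h \<equiv> \<lambda>i \<omega>. analysed n \<omega> i - smean N (analysed n \<omega>)"
  shows "integrable M (\<lambda>\<omega>. \<Sum>i\<le>N. h i \<omega> * wpert n \<omega> i)"
    "expectation (\<lambda>\<omega>. \<Sum>i\<le>N. h i \<omega> * wpert n \<omega> i) = 0"
proof -
  have analysis_labels: "forecast_labels n \<union> vpert_labels n \<subseteq> labels N"
    using forecast_labels_subset vpert_labels_subset by blast
  have "square_integrable M (h i)" if "i \<le> N" for i
    unfolding h_def using that
    by (intro square_integrable_diff square_integrable_smean square_integrable_analysed)
  moreover have "determined_by (forecast_labels n \<union> vpert_labels n) (h i)" if "i \<le> N" for i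
    unfolding h_def using that by (intro determined_by_diff determined_by_smean determined_by_analysed)
  moreover have "expectation (\<lambda>\<omega>. wpert n \<omega> i) = 0" if "i \<le> N" for i
    using expectation_std_normal(1)[OF distr_Wp[OF that]] by (simp add: wpert_def)
  ultimately show "integrable M (\<lambda>\<omega>. \<Sum>i\<le>N. h i \<omega> * wpert n \<omega> i)"
    "expectation (\<lambda>\<omega>. \<Sum>i\<le>N. h i \<omega> * wpert n \<omega> i) = 0"
    using expectation_sum_mult_indep_centered[OF analysis_labels_disjoint_wpert[of n] analysis_labels
        wpert_labels_subset finite_atMost[of N], of h "\<lambda>i \<omega>. wpert n \<omega> i"]
      determined_by_wpert square_integrable_wpert by auto
qed

lemma expectation_avar: "expectation (avar n) = expectation (\<lambda>\<omega>. analysis_var C D (fvar n \<omega>))"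
  using integrable_analysis_var[OF D_nonzero integrable_fvar fvar_nonneg]
    avar_noise_term_centered avar_cross_term_centered
  by (simp add: avar_eq[abs_def])

lemma expectation_fvar_Suc: "expectation (fvar (Suc n)) = A^2 * expectation (avar n) + B^2"
proof -
  have "integrable M (\<lambda>\<omega>. svar N (wpert n \<omega>))"
    using square_integrable_wpert by (rule integrable_svar)
  then show ?thesis
    using integrable_avar fvar_Suc_cross_term_centered expectation_svar_wpert
    by (simp add: fvar_Suc_eq[abs_def] prob_space)
qed

lemma prob_fvar_0_le_half: "0 < prob {\<omega> \<in> space M. fvar 0 \<omega> \<le> P0 / 2}"
proof -
  define \<delta> where "\<delta> = sqrt P0 / 2"
  have "0 < \<delta>" "\<delta>^2 = P0 / 4"
    using P0_pos by (simp_all add: \<delta>_def power_divide)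
  define Ev where "Ev = (\<Inter>l\<in>LXi ` {..N}. rv_of X0 W V xi0 Vp Wp l -` {m0 - \<delta><..<m0 + \<delta>} \<inter> space M)"
  have "0 < prob Ev"
    unfolding Ev_def
  proof (rule prob_Inter_indep_pos)
    fix l assume "l \<in> LXi ` {..N}"
    then obtain i where "i \<le> N" "l = LXi i"
      by auto
    then show "0 < prob (rv_of X0 W V xi0 Vp Wp l -` {m0 - \<delta><..<m0 + \<delta>} \<inter> space M)"
      using P0_pos \<open>0 < \<delta>\<close> by (simp add: prob_normal_interval_pos[OF _ distr_xi0])
  qed (auto simp: labels_def)
  moreover have "Ev \<subseteq> {\<omega> \<in> space M. fvar 0 \<omega> \<le> P0 / 2}"
  proof safe
    fix \<omega> assume "\<omega> \<in> Ev"
    then show "\<omega> \<in> space M"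
      unfolding Ev_def by auto
    have "\<bar>forecast 0 \<omega> i - m0\<bar> \<le> \<delta>" if "i \<le> N" for i
      using \<open>\<omega> \<in> Ev\<close> that unfolding Ev_def forecast_0 by (force simp: abs_le_iff)
    then show "fvar 0 \<omega> \<le> P0 / 2"
      unfolding fvar_def using svar_le_of_abs_diff_le[OF N_ge_1] \<open>\<delta>^2 = P0 / 4\<close> by fastforce
  qed
  moreover have "{\<omega> \<in> space M. fvar 0 \<omega> \<le> P0 / 2} \<in> sets M"
    by measurable
  ultimately show ?thesis
    using finite_measure_mono by (meson less_le_trans)
qed

lemma expectation_avar_less_of_fvar:
  assumes "expectation (fvar n) \<le> kalP A B C D P0 n"
    and "expectation (fvar n) < kalP A B C D P0 n
      \<or> 0 < prob {\<omega> \<in> space M. fvar n \<omega> \<le> kalP A B C D P0 n / 2}"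
  shows "expectation (avar n) < kalPhat A B C D P0 n"
  unfolding expectation_avar kalPhat_eq_analysis_var[OF P0_pos B_nonzero D_nonzero]
  using C_nonzero D_nonzero kalP_pos[OF P0_pos B_nonzero D_nonzero] integrable_fvar fvar_nonneg assms
  by (rule expectation_analysis_var_less)

lemma expectation_fvar_Suc_less_of_avar:
  "expectation (avar n) < kalPhat A B C D P0 n
    \<Longrightarrow> expectation (fvar (Suc n)) < kalP A B C D P0 (Suc n)"
  unfolding expectation_fvar_Suc kalP_Suc_kalPhat using A_nonzero by simp

lemma expectation_avar_less: "expectation (avar n) < kalPhat A B C D P0 n"
proof (induction n)
  case 0
  show ?case
    using expectation_fvar_0 prob_fvar_0_le_half by (intro expectation_avar_less_of_fvar) simp_all
next
  case (Suc n)
  then have "expectation (fvar (Suc n)) < kalP A B C D P0 (Suc n)"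
    by (rule expectation_fvar_Suc_less_of_avar)
  then show ?case
    by (intro expectation_avar_less_of_fvar) simp_all
qed

end

theorem mainTheorem19:
  fixes M :: "'a measure"
    and A B C D P0 m0 :: real and N n :: nat
    and X0 :: "'a \<Rightarrow> real" and W V xi0 :: "nat \<Rightarrow> 'a \<Rightarrow> real"
    and Vp Wp :: "nat \<Rightarrow> nat \<Rightarrow> 'a \<Rightarrow> real"
  assumes "prob_space M"
    and "A \<noteq> 0" "B \<noteq> 0" "C \<noteq> 0" "D \<noteq> 0" "P0 > 0" "N \<ge> 1"
    and "distributed M lborel X0 (normal_density m0 (sqrt P0))"
    and "\<And>i. i \<le> N \<Longrightarrow> distributed M lborel (xi0 i) (normal_density m0 (sqrt P0))"
    and "\<And>k. distributed M lborel (W k) std_normal_density"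
    and "\<And>k. distributed M lborel (V k) std_normal_density"
    and "\<And>i k. i \<le> N \<Longrightarrow> distributed M lborel (Wp i k) std_normal_density"
    and "\<And>i k. i \<le> N \<Longrightarrow> distributed M lborel (Vp i k) std_normal_density"
    and "prob_space.indep_vars M (\<lambda>_. borel) (rv_of X0 W V xi0 Vp Wp) (labels N)"
  shows "integrable M (enkf_phat A B C D N X0 W V xi0 Vp Wp n)
       \<and> prob_space.expectation M (enkf_phat A B C D N X0 W V xi0 Vp Wp n) < kalPhat A B C D P0 n
       \<and> integrable M (enkf_p A B C D N X0 W V xi0 Vp Wp (Suc n))
       \<and> prob_space.expectation M (enkf_p A B C D N X0 W V xi0 Vp Wp (Suc n)) < kalP A B C D P0 (Suc n)"
proof -
  interpret enkf_setting M X0 W V xi0 Vp Wp N A B C D P0 m0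
    using assms by (intro enkf_setting.intro indep_family.intro indep_family_axioms.intro
        enkf_setting_axioms.intro) auto
  have "enkf_phat A B C D N X0 W V xi0 Vp Wp n = avar n"
    by (simp add: fun_eq_iff enkf_phat_def avar_def analysed_def obs_def vpert_def forecast_def)
  moreover have "enkf_p A B C D N X0 W V xi0 Vp Wp (Suc n) = fvar (Suc n)"
    by (simp add: fun_eq_iff enkf_p_def fvar_def forecast_def)
  ultimately show ?thesis
    using integrable_avar integrable_fvar expectation_avar_less
      expectation_fvar_Suc_less_of_avar[OF expectation_avar_less] by simp
qed

end
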